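(* Let $B$ be a commutative ring with identity and $A$ a dense subring of $B$. If $A$ is completely normal, then $B$ is completely normal and hence $B$ is a pm-ring.
   Context: All rings are commutative with identity; subrings contain the identity. A ring $R$ is completely normal if $\operatorname{spec} R$ (prime ideals with the Zariski topology) is a completely normal topological space. A pm-ring is a ring in which every prime ideal is contained in a unique maximal ideal. A subring $A$ of $B$ is dense in $B$ if for every ideal $I$ of $B$ and every $b\in B\setminus \operatorname{rad}(I)$ there exists $a\in B\setminus\operatorname{rad}(I)$ with $ab\in A$. *)

theory Defs
  imports "HOL-Analysis.Analysis"
begin

text \<open>Rings are carrier sets R inside an ambient commutative ring 'a (for B we use UNIV).\<close>

definition is_subring :: "'a::comm_ring_1 set \<Rightarrow> 'a set \<Rightarrow> bool" where
  "is_subring A R \<longleftrightarrow> A \<subseteq> R \<and> 0 \<in> A \<and> 1 \<in> A \<and>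
     (\<forall>x\<in>A. \<forall>y\<in>A. x + y \<in> A \<and> x - y \<in> A \<and> x * y \<in> A)"

definition ring_ideal :: "'a::comm_ring_1 set \<Rightarrow> 'a set \<Rightarrow> bool" where
  "ring_ideal R I \<longleftrightarrow> I \<subseteq> R \<and> 0 \<in> I \<and>
     (\<forall>x\<in>I. \<forall>y\<in>I. x + y \<in> I) \<and> (\<forall>r\<in>R. \<forall>x\<in>I. r * x \<in> I)"

definition prime_ideal :: "'a::comm_ring_1 set \<Rightarrow> 'a set \<Rightarrow> bool" where
  "prime_ideal R P \<longleftrightarrow> ring_ideal R P \<and> 1 \<notin> P \<and>
     (\<forall>a\<in>R. \<forall>b\<in>R. a * b \<in> P \<longrightarrow> a \<in> P \<or> b \<in> P)"

definition maximal_ideal :: "'a::comm_ring_1 set \<Rightarrow> 'a set \<Rightarrow> bool" where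
  "maximal_ideal R M \<longleftrightarrow> ring_ideal R M \<and> 1 \<notin> M \<and>
     (\<forall>J. ring_ideal R J \<and> 1 \<notin> J \<and> M \<subseteq> J \<longrightarrow> J = M)"

definition radical :: "'a::comm_ring_1 set \<Rightarrow> 'a set" where
  "radical I = {x. \<exists>n::nat. x ^ n \<in> I}"

definition spec :: "'a::comm_ring_1 set \<Rightarrow> 'a set set" where
  "spec R = {P. prime_ideal R P}"

definition zariski :: "'a::comm_ring_1 set \<Rightarrow> 'a set topology" where
  "zariski R = topology_generated_by {{P \<in> spec R. a \<notin> P} | a. a \<in> R}"

definition completely_normal_ring :: "'a::comm_ring_1 set \<Rightarrow> bool" where
  "completely_normal_ring R \<longleftrightarrow> hereditarily normal_space (zariski R)"

definition pm_ring :: "'a::comm_ring_1 set \<Rightarrow> bool" where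
  "pm_ring R \<longleftrightarrow> (\<forall>P\<in>spec R. \<exists>!M. maximal_ideal R M \<and> P \<subseteq> M)"

definition dense_subring :: "'a::comm_ring_1 set \<Rightarrow> 'a set \<Rightarrow> bool" where
  "dense_subring A B \<longleftrightarrow> is_subring A B \<and>
     (\<forall>I. ring_ideal B I \<longrightarrow>
        (\<forall>b\<in>B - radical I. \<exists>a\<in>B - radical I. a * b \<in> A))"

end

theory Submission
  imports Defs
begin

(*
  Contraction Q \<mapsto> Q \<inter> A maps spec B into spec A. Density makes it injective (if b \<in> Q1 - Q2,
  pick a \<notin> Q2 with a b \<in> A; then a b lies in Q1 \<inter> A but not in Q2 \<inter> A) and makes the image of
  a basic open set D(b) the trace of the open set \<Union>{D(a b) | a b \<in> A}. Hence spec B is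
  homeomorphic to a subspace of spec A, and complete normality passes to subspaces.

  If a prime P lay below two distinct maximal ideals M1, M2, these would be separated points of
  spec B, so a completely normal spec B would give them disjoint open neighbourhoods; but open
  sets of a spectrum are closed under generalization, so both would contain P.
*)

lemma open_map_topology_generated_by:
  assumes "inj_on f (\<Union>\<S>)" "\<And>U. U \<in> \<S> \<Longrightarrow> openin Y (f ` U)"
  shows "open_map (topology_generated_by \<S>) Y f"
  unfolding open_map_def
proof (intro allI impI)
  fix U assume "openin (topology_generated_by \<S>) U"
  then have "generate_topology_on \<S> U"
    by (rule openin_topology_generated_by)
  then show "openin Y (f ` U)"
  proof (induction rule: generate_topology_on.induct)
    case (Int a b)
    then have "a \<subseteq> \<Union>\<S>" "b \<subseteq> \<Union>\<S>"
      by (metis openin_subset openin_topology_generated_by_iff topology_generated_by_topspace)+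
    then have "f ` (a \<inter> b) = f ` a \<inter> f ` b"
      using assms(1) by (simp add: inj_on_image_Int)
    then show ?case
      using Int.IH by (simp add: openin_Int)
  qed (auto simp: image_Union assms(2) intro!: openin_Union)
qed

lemma prime_ideal_radical_eq:
  assumes "prime_ideal (UNIV :: 'a::comm_ring_1 set) Q"
  shows "radical Q = Q"
proof -
  have "x \<in> Q" if "x ^ n \<in> Q" for x :: 'a and n
    using that by (induction n) (use assms in \<open>auto simp: prime_ideal_def\<close>)
  moreover have "x ^ 1 \<in> Q" if "x \<in> Q" for x :: 'a
    using that by simp
  ultimately show ?thesis
    unfolding radical_def by blast
qed

lemma prime_ideal_Int_subring:
  assumes "is_subring A R" "prime_ideal R Q"
  shows "prime_ideal A (Q \<inter> A)"
proof -
  have "A \<subseteq> R" "0 \<in> A"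
    and "\<And>x y. x \<in> A \<Longrightarrow> y \<in> A \<Longrightarrow> x + y \<in> A \<and> x * y \<in> A"
    using assms(1) unfolding is_subring_def by auto
  then show ?thesis
    using assms(2) unfolding prime_ideal_def ring_ideal_def by (auto simp: subset_iff)
qed

lemma ring_ideal_add_multiples:
  assumes "ring_ideal (UNIV :: 'a::comm_ring_1 set) M"
  shows "ring_ideal UNIV {m + r * a | m r. m \<in> M}"
  unfolding ring_ideal_def
proof (intro conjI ballI)
  have "0 = 0 + 0 * a" "0 \<in> M"
    using assms unfolding ring_ideal_def by simp_all
  then show "0 \<in> {m + r * a | m r. m \<in> M}"
    by blast
next
  fix x y assume "x \<in> {m + r * a | m r. m \<in> M}" "y \<in> {m + r * a | m r. m \<in> M}"
  then obtain m1 r1 m2 r2 where "x = m1 + r1 * a" "y = m2 + r2 * a" "m1 \<in> M" "m2 \<in> M"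
    by blast
  moreover from this have "m1 + m2 \<in> M"
    using assms unfolding ring_ideal_def by blast
  ultimately have "x + y = (m1 + m2) + (r1 + r2) * a \<and> m1 + m2 \<in> M"
    by (simp add: algebra_simps)
  then show "x + y \<in> {m + r * a | m r. m \<in> M}" by blast
next
  fix s x assume "x \<in> {m + r * a | m r. m \<in> M}"
  then obtain m1 r1 where "x = m1 + r1 * a" "m1 \<in> M" by blast
  moreover from this have "s * m1 \<in> M"
    using assms unfolding ring_ideal_def by blast
  ultimately have "s * x = s * m1 + (s * r1) * a \<and> s * m1 \<in> M"
    by (simp add: algebra_simps)
  then show "s * x \<in> {m + r * a | m r. m \<in> M}" by blast
qed auto

lemma maximal_ideal_imp_prime_ideal:
  assumes "maximal_ideal (UNIV :: 'a::comm_ring_1 set) M"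
  shows "prime_ideal UNIV M"
proof -
  have M: "ring_ideal UNIV M" "1 \<notin> M"
    and maximal: "\<And>J. ring_ideal UNIV J \<Longrightarrow> 1 \<notin> J \<Longrightarrow> M \<subseteq> J \<Longrightarrow> J = M"
    using assms unfolding maximal_ideal_def by auto
  have "a \<in> M \<or> b \<in> M" if ab: "a * b \<in> M" for a b :: 'a
  proof (rule ccontr)
    assume "\<not> (a \<in> M \<or> b \<in> M)"
    then have "a \<notin> M" "b \<notin> M" by auto
    define J where "J = {m + r * a | m r. m \<in> M}"
    have "ring_ideal UNIV J"
      unfolding J_def using M(1) by (rule ring_ideal_add_multiples)
    moreover have "m = m + 0 * a" for m
      by simp
    then have "M \<subseteq> J"
      unfolding J_def by blast
    moreover have "a = 0 + 1 * a" "0 \<in> M"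
      using M(1) unfolding ring_ideal_def by simp_all
    then have "a \<in> J"
      unfolding J_def by blast
    ultimately have "1 \<in> J"
      using maximal \<open>a \<notin> M\<close> by blast
    then obtain m r where "1 = m + r * a" "m \<in> M"
      unfolding J_def by blast
    then have "b = b * m + r * (a * b)"
      by (metis mult.commute mult.left_commute mult_1_right distrib_left)
    moreover have "b * m \<in> M" "r * (a * b) \<in> M"
      using M(1) \<open>m \<in> M\<close> ab unfolding ring_ideal_def by (auto simp: mult.commute)
    ultimately have "b \<in> M"
      using M(1) unfolding ring_ideal_def by metis
    with \<open>b \<notin> M\<close> show False ..
  qed
  then show ?thesis
    using M unfolding prime_ideal_def by blast
qed

lemma ex_maximal_ideal_superset:
  assumes "ring_ideal (UNIV :: 'a::comm_ring_1 set) P" "1 \<notin> P"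
  obtains M where "maximal_ideal UNIV M" "P \<subseteq> M"
proof -
  define \<A> where "\<A> = {J. ring_ideal (UNIV :: 'a set) J \<and> 1 \<notin> J \<and> P \<subseteq> J}"
  have "P \<in> \<A>"
    using assms unfolding \<A>_def by auto
  moreover have "\<Union>C \<in> \<A>" if "C \<noteq> {}" "subset.chain \<A> C" for C
  proof -
    have C: "C \<subseteq> \<A>" "\<And>X Y. X \<in> C \<Longrightarrow> Y \<in> C \<Longrightarrow> X \<subseteq> Y \<or> Y \<subseteq> X"
      using that(2) unfolding subset.chain_def by auto
    have "x + y \<in> \<Union>C" if "x \<in> \<Union>C" "y \<in> \<Union>C" for x y
    proof -
      obtain Z where "Z \<in> C" "x \<in> Z" "y \<in> Z"
        using \<open>x \<in> \<Union>C\<close> \<open>y \<in> \<Union>C\<close> C(2) by blast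
      then show ?thesis
        using C(1) unfolding \<A>_def ring_ideal_def by blast
    qed
    moreover have "0 \<in> \<Union>C" "1 \<notin> \<Union>C" "P \<subseteq> \<Union>C"
      using that(1) C(1) unfolding \<A>_def ring_ideal_def by blast+
    moreover have "r * x \<in> \<Union>C" if "x \<in> \<Union>C" for r x
      using that C(1) unfolding \<A>_def ring_ideal_def by blast
    ultimately show ?thesis
      unfolding \<A>_def ring_ideal_def by blast
  qed
  ultimately obtain M where "M \<in> \<A>" "\<forall>X\<in>\<A>. M \<subseteq> X \<longrightarrow> X = M"
    using subset_Zorn_nonempty[of \<A>] by blast
  then have "maximal_ideal UNIV M" "P \<subseteq> M"
    unfolding maximal_ideal_def \<A>_def by blast+
  then show thesis ..
qed

definition basic_open :: "'a::comm_ring_1 set \<Rightarrow> 'a \<Rightarrow> 'a set set" where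
  "basic_open R a = {P \<in> spec R. a \<notin> P}"

lemma zariski_eq_topology_generated_by:
  "zariski R = topology_generated_by (basic_open R ` R)"
  unfolding zariski_def basic_open_def by (simp add: setcompr_eq_image)

lemma topspace_zariski:
  assumes "1 \<in> R"
  shows "topspace (zariski R) = spec R"
  using assms unfolding zariski_def spec_def prime_ideal_def by auto

lemma openin_zariski_basic_open:
  "a \<in> R \<Longrightarrow> openin (zariski R) (basic_open R a)"
  unfolding zariski_eq_topology_generated_by by (simp add: topology_generated_by_Basis)

lemma openin_zariski_generalization:
  assumes "openin (zariski R) U" "Q \<in> U" "P \<in> spec R" "P \<subseteq> Q"
  shows "P \<in> U"
proof -
  have "generate_topology_on (basic_open R ` R) U"
    using assms(1) unfolding zariski_eq_topology_generated_by by (rule openin_topology_generated_by)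
  then show ?thesis
    using assms(2-4) unfolding basic_open_def
    by (induction arbitrary: Q rule: generate_topology_on.induct) blast+
qed

lemma notin_zariski_closure_of_singleton:
  assumes "P \<in> spec R" "Q \<in> spec R" "\<not> Q \<subseteq> P"
  shows "P \<notin> zariski R closure_of {Q}"
proof -
  obtain a where "a \<in> Q" "a \<notin> P"
    using assms(3) by blast
  moreover have "Q \<subseteq> R"
    using assms(2) unfolding spec_def prime_ideal_def ring_ideal_def by blast
  ultimately have "openin (zariski R) (basic_open R a)"
    by (auto intro: openin_zariski_basic_open)
  moreover have "P \<in> basic_open R a" "Q \<notin> basic_open R a"
    using assms(1) \<open>a \<in> Q\<close> \<open>a \<notin> P\<close> by (auto simp: basic_open_def)
  ultimately show ?thesis
    unfolding in_closure_of by blast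
qed

lemma separatedin_zariski_incomparable:
  assumes "1 \<in> R" "P \<in> spec R" "Q \<in> spec R" "\<not> P \<subseteq> Q" "\<not> Q \<subseteq> P"
  shows "separatedin (zariski R) {P} {Q}"
  using assms notin_zariski_closure_of_singleton
  unfolding separatedin_def topspace_zariski[OF assms(1)] by blast

lemma dense_subring_avoids_prime:
  assumes "dense_subring A (UNIV :: 'a::comm_ring_1 set)" "prime_ideal UNIV Q" "b \<notin> Q"
  obtains a where "a * b \<in> A" "a * b \<notin> Q"
proof -
  obtain a where "a \<notin> Q" "a * b \<in> A"
    using assms prime_ideal_radical_eq[OF assms(2)]
    unfolding dense_subring_def prime_ideal_def by blast
  moreover from \<open>a \<notin> Q\<close> have "a * b \<notin> Q"
    using assms(2,3) unfolding prime_ideal_def by blast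
  ultimately show thesis
    using that by blast
qed

lemma inj_on_contraction:
  assumes "dense_subring A (UNIV :: 'a::comm_ring_1 set)"
  shows "inj_on (\<lambda>Q. Q \<inter> A) (spec UNIV)"
proof -
  have "Q1 \<subseteq> Q2"
    if Q1: "Q1 \<in> spec UNIV" and Q2: "Q2 \<in> spec UNIV" and eq: "Q1 \<inter> A = Q2 \<inter> A"
    for Q1 Q2 :: "'a set"
  proof
    fix b assume "b \<in> Q1"
    show "b \<in> Q2"
    proof (rule ccontr)
      assume "b \<notin> Q2"
      then obtain a where "a * b \<in> A" "a * b \<notin> Q2"
        using dense_subring_avoids_prime[OF assms] Q2 unfolding spec_def by blast
      moreover have "a * b \<in> Q1"
        using \<open>b \<in> Q1\<close> Q1 unfolding spec_def prime_ideal_def ring_ideal_def by blast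
      ultimately show False
        using eq by blast
    qed
  qed
  then show ?thesis
    by (intro inj_onI) blast
qed

lemma contraction_image_basic_open:
  assumes "dense_subring A (UNIV :: 'a::comm_ring_1 set)"
  shows "(\<lambda>Q. Q \<inter> A) ` basic_open (UNIV :: 'a set) b =
    (\<Union>r\<in>{r. r * b \<in> A}. basic_open A (r * b)) \<inter> (\<lambda>Q. Q \<inter> A) ` spec UNIV"
    (is "?lhs = ?rhs")
proof
  show "?lhs \<subseteq> ?rhs"
  proof
    fix P assume "P \<in> ?lhs"
    then obtain Q where Q: "prime_ideal UNIV Q" "b \<notin> Q" "P = Q \<inter> A"
      unfolding basic_open_def spec_def by blast
    then obtain a where "a * b \<in> A" "a * b \<notin> Q"
      using dense_subring_avoids_prime[OF assms] by blast
    moreover have "prime_ideal A P"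
      using Q prime_ideal_Int_subring assms unfolding dense_subring_def by blast
    ultimately show "P \<in> ?rhs"
      using Q unfolding basic_open_def spec_def by blast
  qed
next
  show "?rhs \<subseteq> ?lhs"
  proof
    fix P assume "P \<in> ?rhs"
    then obtain r Q where "r * b \<in> A" "r * b \<notin> P" "prime_ideal UNIV Q" "P = Q \<inter> A"
      unfolding basic_open_def spec_def by blast
    then have "b \<notin> Q"
      unfolding prime_ideal_def ring_ideal_def by blast
    with \<open>prime_ideal UNIV Q\<close> \<open>P = Q \<inter> A\<close> show "P \<in> ?lhs"
      unfolding basic_open_def spec_def by blast
  qed
qed

lemma homeomorphic_map_contraction:
  assumes "dense_subring A (UNIV :: 'a::comm_ring_1 set)"
  shows "homeomorphic_map (zariski UNIV)
    (subtopology (zariski A) ((\<lambda>Q. Q \<inter> A) ` spec UNIV)) (\<lambda>Q. Q \<inter> A)"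
    (is "homeomorphic_map ?X (subtopology ?Y ?T) ?f")
proof -
  have "is_subring A UNIV"
    using assms unfolding dense_subring_def by blast
  then have "1 \<in> A" and contraction_prime: "?T \<subseteq> spec A"
    using prime_ideal_Int_subring unfolding is_subring_def spec_def by blast+
  have "continuous_map ?X ?Y ?f"
    unfolding zariski_eq_topology_generated_by[of A]
  proof (rule continuous_on_generated_topo)
    fix U assume "U \<in> basic_open A ` A"
    then obtain a where "a \<in> A" "U = basic_open A a" by blast
    then have "?f -` U \<inter> topspace ?X = basic_open UNIV a"
      using contraction_prime unfolding topspace_zariski[OF UNIV_I] basic_open_def by auto
    then show "openin ?X (?f -` U \<inter> topspace ?X)"
      by (simp add: openin_zariski_basic_open)
  next
    have "?T \<subseteq> basic_open A 1"
      using contraction_prime unfolding basic_open_def spec_def prime_ideal_def by auto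
    then show "?f ` topspace ?X \<subseteq> \<Union> (basic_open A ` A)"
      using \<open>1 \<in> A\<close> by (auto simp: topspace_zariski)
  qed
  then have "continuous_map ?X (subtopology ?Y ?T) ?f"
    by (simp add: continuous_map_in_subtopology topspace_zariski)
  moreover have "open_map ?X (subtopology ?Y ?T) ?f"
    unfolding zariski_eq_topology_generated_by[of UNIV]
  proof (rule open_map_topology_generated_by)
    show "inj_on ?f (\<Union> (basic_open UNIV ` UNIV))"
      using inj_on_contraction[OF assms] by (rule inj_on_subset) (auto simp: basic_open_def)
    fix U :: "'a set set" assume "U \<in> basic_open UNIV ` UNIV"
    then obtain b where "U = basic_open UNIV b" by blast
    then have "?f ` U = (\<Union>r\<in>{r. r * b \<in> A}. basic_open A (r * b)) \<inter> ?T"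
      by (simp add: contraction_image_basic_open[OF assms])
    moreover have "openin ?Y (\<Union>r\<in>{r. r * b \<in> A}. basic_open A (r * b))"
      by (intro openin_Union) (auto intro: openin_zariski_basic_open)
    ultimately show "openin (subtopology ?Y ?T) (?f ` U)"
      by (simp add: openin_subtopology_Int)
  qed
  moreover have "?f ` topspace ?X = topspace (subtopology ?Y ?T)"
    using contraction_prime \<open>1 \<in> A\<close> by (auto simp: topspace_zariski)
  moreover have "inj_on ?f (topspace ?X)"
    using inj_on_contraction[OF assms] by (simp add: topspace_zariski)
  ultimately show ?thesis
    by (rule bijective_open_imp_homeomorphic_map)
qed

lemma completely_normal_ring_dense_extension:
  assumes "dense_subring A (UNIV :: 'a::comm_ring_1 set)" "completely_normal_ring A"
  shows "completely_normal_ring (UNIV :: 'a set)"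
proof -
  have "hereditarily normal_space (subtopology (zariski A) ((\<lambda>Q. Q \<inter> A) ` spec UNIV))"
    using assms(2) unfolding completely_normal_ring_def by (rule hereditarily_subtopology)
  then show ?thesis
    unfolding completely_normal_ring_def
    using homeomorphic_hereditarily_normal_space homeomorphic_map_contraction[OF assms(1)]
      homeomorphic_map_imp_homeomorphic_space by blast
qed

lemma completely_normal_ring_imp_pm_ring:
  assumes "completely_normal_ring (UNIV :: 'a::comm_ring_1 set)"
  shows "pm_ring (UNIV :: 'a set)"
  unfolding pm_ring_def
proof
  fix P :: "'a set" assume P: "P \<in> spec UNIV"
  have "M1 = M2"
    if M1: "maximal_ideal UNIV M1" "P \<subseteq> M1" and M2: "maximal_ideal UNIV M2" "P \<subseteq> M2"
    for M1 M2
  proof (rule ccontr)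
    assume "M1 \<noteq> M2"
    then have "\<not> M1 \<subseteq> M2" "\<not> M2 \<subseteq> M1"
      using M1(1) M2(1) by (metis maximal_ideal_def)+
    moreover have "M1 \<in> spec UNIV" "M2 \<in> spec UNIV"
      using M1(1) M2(1) maximal_ideal_imp_prime_ideal unfolding spec_def by blast+
    ultimately have "separatedin (zariski UNIV) {M1} {M2}"
      by (simp add: separatedin_zariski_incomparable)
    then obtain U V where "openin (zariski UNIV) U" "openin (zariski UNIV) V"
      and "{M1} \<subseteq> U" "{M2} \<subseteq> V" "disjnt U V"
      using assms by (meson completely_normal_ring_def hereditarily_normal_separation)
    then have "P \<in> U" "P \<in> V"
      using openin_zariski_generalization P M1(2) M2(2) by (meson insert_subset)+
    with \<open>disjnt U V\<close> show False
      by (simp add: disjnt_iff)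
  qed
  moreover obtain M where "maximal_ideal UNIV M" "P \<subseteq> M"
    using P ex_maximal_ideal_superset unfolding spec_def prime_ideal_def by blast
  ultimately show "\<exists>!M. maximal_ideal UNIV M \<and> P \<subseteq> M"
    by blast
qed

theorem theorem4p7:
  fixes A :: "'a::comm_ring_1 set"
  assumes "dense_subring A (UNIV :: 'a set)"
    and "completely_normal_ring A"
  shows "completely_normal_ring (UNIV :: 'a set) \<and> pm_ring (UNIV :: 'a set)"
  using completely_normal_ring_dense_extension[OF assms]
    completely_normal_ring_imp_pm_ring by blast

end
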